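(* Let $\mathbb F$ be algebraically closed with $\operatorname{char}\mathbb F\ne2$, $a,b,c\in\mathbb F$, $d\in\mathbb N$. The $\Re$-module $R_d(a,b,c)$ is irreducible if and only if both (i) $\operatorname{char}\mathbb F=0$ or $\operatorname{char}\mathbb F>d$, and (ii) none of $a+b+c+1$, $-a+b+c$, $a-b+c$, $a+b-c$ lies in $\{\tfrac d2-i\mid i=1,2,\dots,d\}$.
   Context: The Racah algebra $\Re$ is the unital associative $\mathbb F$-algebra with generators $A,B,C,D$ and relations $[A,B]=[B,C]=[C,A]=2D$ together with the requirement that each of $\alpha:=[A,D]+AC-BA$, $\beta:=[B,D]+BA-CB$, $\gamma:=[C,D]+CB-AC$ is central in $\Re$; $\delta:=A+B+C$. For $a,b,c\in\mathbb F$ and $d\in\mathbb N$ set $\theta_i=(a+\tfrac d2-i)(a+\tfrac d2-i+1)$, $\theta_i^*=(b+\tfrac d2-i)(b+\tfrac d2-i+1)$, $\varphi_i=i(i-d-1)(a+b+c+\tfrac d2-i+2)(a+b-c+\tfrac d2-i+1)$. $R_d(a,b,c)$ denotes the $(d+1)$-dimensional $\Re$-module with a basis $v_0,\dots,v_d$ such that $Av_i=\theta_iv_i+v_{i+1}$ ($v_{d+1}=0$), $Bv_i=\theta_i^*v_i+\varphi_iv_{i-1}$ ($v_{-1}=0$), and $\alpha,\beta,\delta$ act as the scalars $(c-b)(c+b+1)(a-\tfrac d2)(a+\tfrac d2+1)$, $(a-c)(a+c+1)(b-\tfrac d2)(b+\tfrac d2+1)$, $\tfrac d2(\tfrac d2+1)+a(a+1)+b(b+1)+c(c+1)$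 respectively (exists, unique up to isomorphism). *)

theory Defs
  imports "HOL-Computational_Algebra.Polynomial"
begin

text \<open>Coordinate space of R_d(a,b,c): a vector sum_i x_i v_i is represented by its
  coefficient function x :: nat => 'a, supported in {0..d}.\<close>

definition coord_space :: "nat \<Rightarrow> (nat \<Rightarrow> 'a::field) set" where
  "coord_space d = {x. \<forall>j>d. x j = 0}"

definition racah_theta :: "'a::field \<Rightarrow> nat \<Rightarrow> nat \<Rightarrow> 'a" where
  "racah_theta a d i = (a + of_nat d / 2 - of_nat i) * (a + of_nat d / 2 - of_nat i + 1)"

definition racah_phi :: "'a::field \<Rightarrow> 'a \<Rightarrow> 'a \<Rightarrow> nat \<Rightarrow> nat \<Rightarrow> 'a" where
  "racah_phi a b c d i = of_nat i * (of_nat i - of_nat d - 1)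
      * (a + b + c + of_nat d / 2 - of_nat i + 2) * (a + b - c + of_nat d / 2 - of_nat i + 1)"

text \<open>A v_i = theta_i v_i + v_(i+1), with v_(d+1) = 0.\<close>
definition RA :: "'a::field \<Rightarrow> nat \<Rightarrow> (nat \<Rightarrow> 'a) \<Rightarrow> (nat \<Rightarrow> 'a)" where
  "RA a d x = (\<lambda>j. if j \<le> d then racah_theta a d j * x j + (if j \<ge> 1 then x (j - 1) else 0) else 0)"

text \<open>B v_i = theta*_i v_i + phi_i v_(i-1), with v_(-1) = 0.\<close>
definition RB :: "'a::field \<Rightarrow> 'a \<Rightarrow> 'a \<Rightarrow> nat \<Rightarrow> (nat \<Rightarrow> 'a) \<Rightarrow> (nat \<Rightarrow> 'a)" where
  "RB a b c d x = (\<lambda>j. if j \<le> d then racah_theta b d j * x j + racah_phi a b c d (j + 1) * x (j + 1) else 0)"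

definition racah_delta :: "'a::field \<Rightarrow> 'a \<Rightarrow> 'a \<Rightarrow> nat \<Rightarrow> 'a" where
  "racah_delta a b c d = of_nat d / 2 * (of_nat d / 2 + 1) + a * (a + 1) + b * (b + 1) + c * (c + 1)"

text \<open>C = delta - A - B (delta = A + B + C acts as a scalar), D = [A,B]/2.\<close>
definition RC :: "'a::field \<Rightarrow> 'a \<Rightarrow> 'a \<Rightarrow> nat \<Rightarrow> (nat \<Rightarrow> 'a) \<Rightarrow> (nat \<Rightarrow> 'a)" where
  "RC a b c d x = (\<lambda>j. racah_delta a b c d * x j - RA a d x j - RB a b c d x j)"

definition RD :: "'a::field \<Rightarrow> 'a \<Rightarrow> 'a \<Rightarrow> nat \<Rightarrow> (nat \<Rightarrow> 'a) \<Rightarrow> (nat \<Rightarrow> 'a)" where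
  "RD a b c d x = (\<lambda>j. (RA a d (RB a b c d x) j - RB a b c d (RA a d x) j) / 2)"

definition is_submodule :: "(nat \<Rightarrow> 'a::field) set \<Rightarrow> ((nat \<Rightarrow> 'a) \<Rightarrow> (nat \<Rightarrow> 'a)) set
     \<Rightarrow> (nat \<Rightarrow> 'a) set \<Rightarrow> bool" where
  "is_submodule V ops W \<longleftrightarrow> W \<subseteq> V \<and> (\<lambda>_. 0) \<in> W
     \<and> (\<forall>x\<in>W. \<forall>y\<in>W. (\<lambda>j. x j + y j) \<in> W)
     \<and> (\<forall>s. \<forall>x\<in>W. (\<lambda>j. s * x j) \<in> W)
     \<and> (\<forall>f\<in>ops. \<forall>x\<in>W. f x \<in> W)"

definition irreducible_module :: "(nat \<Rightarrow> 'a::field) set \<Rightarrow> ((nat \<Rightarrow> 'a) \<Rightarrow> (nat \<Rightarrow> 'a)) set \<Rightarrow> bool" where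
  "irreducible_module V ops \<longleftrightarrow> V \<noteq> {\<lambda>_. 0} \<and>
     (\<forall>W. is_submodule V ops W \<longrightarrow> W = {\<lambda>_. 0} \<or> W = V)"

definition R_irreducible :: "'a::field \<Rightarrow> 'a \<Rightarrow> 'a \<Rightarrow> nat \<Rightarrow> bool" where
  "R_irreducible a b c d \<longleftrightarrow> irreducible_module (coord_space d)
     {RA a d, RB a b c d, RC a b c d, RD a b c d}"

end

theory Submission
  imports Defs
begin

(* In the basis v 0, ..., v d, A raises and B lowers the index, B with coefficients phi.
   When alpha and delta act as scalars, A and B satisfy a cubic tridiagonal relation.  It forces
   B to raise the index of the split basis u i = (A - theta (i+1)) ... (A - theta d) v 0, which
   A lowers, with coefficients psi.
   If all phi k and psi k (1 <= k <= d) are nonzero, lowering with B and then applying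
   (A - theta 1) ... (A - theta d) turns any nonzero vector of a submodule into a multiple of u 0;
   raising with B reaches u d = v 0, from which A generates everything.  If phi k = 0, then
   v k, ..., v d span a submodule; if psi k = 0, then u 0, ..., u (k - 1) do.  Finally phi and psi
   factor into linear forms whose zeros are exactly the excluded characteristics and values. *)

lemma RA_add: "RA a d (\<lambda>j. f j + g j) = (\<lambda>j. RA a d f j + RA a d g j)"
  by (auto simp: RA_def algebra_simps fun_eq_iff)
lemma RA_diff: "RA a d (\<lambda>j. f j - g j) = (\<lambda>j. RA a d f j - RA a d g j)"
  by (auto simp: RA_def algebra_simps fun_eq_iff)
lemma RA_smult: "RA a d (\<lambda>j. s * f j) = (\<lambda>j. s * RA a d f j)"
  by (auto simp: RA_def algebra_simps fun_eq_iff)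
lemma RA_sum: "RA a d (\<lambda>j. \<Sum>k\<in>K. f k j) = (\<lambda>j. \<Sum>k\<in>K. RA a d (f k) j)"
  by (auto simp: RA_def sum_distrib_left sum.distrib fun_eq_iff)
lemma RB_add: "RB a b c d (\<lambda>j. f j + g j) = (\<lambda>j. RB a b c d f j + RB a b c d g j)"
  by (auto simp: RB_def algebra_simps fun_eq_iff)
lemma RB_smult: "RB a b c d (\<lambda>j. s * f j) = (\<lambda>j. s * RB a b c d f j)"
  by (auto simp: RB_def algebra_simps fun_eq_iff)
lemma RB_sum: "RB a b c d (\<lambda>j. \<Sum>k\<in>K. f k j) = (\<lambda>j. \<Sum>k\<in>K. RB a b c d (f k) j)"
  by (auto simp: RB_def sum_distrib_left sum.distrib fun_eq_iff)

lemma RB_in_coord_space: "RB a b c d x \<in> coord_space d"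
  by (simp add: RB_def coord_space_def)

lemma coord_space_eq_0:
  assumes "x \<in> coord_space d" and "\<forall>j\<le>d. x j = 0"
  shows "x = (\<lambda>_. 0)"
  using assms by (auto simp: coord_space_def fun_eq_iff not_le[symmetric])

definition is_subspace :: "(nat \<Rightarrow> 'a::field) set \<Rightarrow> bool" where
  "is_subspace W \<longleftrightarrow> (\<lambda>_. 0) \<in> W \<and> (\<forall>x\<in>W. \<forall>y\<in>W. (\<lambda>j. x j + y j) \<in> W)
     \<and> (\<forall>s. \<forall>x\<in>W. (\<lambda>j. s * x j) \<in> W)"

lemma is_subspace_add: "is_subspace W \<Longrightarrow> x \<in> W \<Longrightarrow> y \<in> W \<Longrightarrow> (\<lambda>j. x j + y j) \<in> W"
  and is_subspace_smult: "is_subspace W \<Longrightarrow> x \<in> W \<Longrightarrow> (\<lambda>j. s * x j) \<in> W"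
  by (simp_all add: is_subspace_def)

lemma is_subspace_diff: "is_subspace W \<Longrightarrow> x \<in> W \<Longrightarrow> y \<in> W \<Longrightarrow> (\<lambda>j. x j - y j) \<in> W"
  using is_subspace_add[of W x "\<lambda>j. - 1 * y j"] is_subspace_smult by fastforce

lemma is_subspace_sum:
  assumes "is_subspace W" and "\<And>k. k \<in> K \<Longrightarrow> f k \<in> W"
  shows "(\<lambda>j. \<Sum>k\<in>K. f k j) \<in> W"
proof (cases "finite K")
  case True
  then show ?thesis using assms(2)
    by (induction K rule: finite_induct)
      (auto intro: is_subspace_add[OF assms(1)] simp: assms(1)[unfolded is_subspace_def])
qed (use assms(1) in \<open>simp add: is_subspace_def\<close>)

lemma is_submodule_subspace: "is_submodule V ops W \<Longrightarrow> is_subspace W"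
  by (simp add: is_submodule_def is_subspace_def)

lemma ball_atLeastAtMost_reflect: "(\<forall>k\<in>{1..d}. P (Suc d - k)) \<longleftrightarrow> (\<forall>k\<in>{1..d}. P k)"
proof
  assume H: "\<forall>k\<in>{1..d}. P (Suc d - k)"
  show "\<forall>k\<in>{1..d}. P k"
  proof
    fix k assume "k \<in> {1..d}"
    then have "Suc d - k \<in> {1..d}" "Suc d - (Suc d - k) = k" by auto
    with H show "P k" by metis
  qed
next
  assume H: "\<forall>k\<in>{1..d}. P k"
  show "\<forall>k\<in>{1..d}. P (Suc d - k)"
  proof
    fix k assume "k \<in> {1..d}"
    then have "Suc d - k \<in> {1..d}" by auto
    with H show "P (Suc d - k)" ..
  qed
qed

locale racah_module =
  fixes a b c :: "'a::field" and d :: nat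
  assumes two_nonzero: "(2::'a) \<noteq> 0"
begin

abbreviation "A \<equiv> RA a d"
abbreviation "B \<equiv> RB a b c d"
abbreviation "\<theta> \<equiv> racah_theta a d"
abbreviation "\<theta>' \<equiv> racah_theta b d"
abbreviation "\<phi> \<equiv> racah_phi a b c d"
abbreviation "\<delta> \<equiv> racah_delta a b c d"

definition \<psi> :: "nat \<Rightarrow> 'a" where
  "\<psi> i = of_nat i * (of_nat i - of_nat d - 1) * (a - b - c + of_nat d / 2 - of_nat i)
      * (a - b + c + of_nat d / 2 - of_nat i + 1)"

definition \<alpha> :: 'a where
  "\<alpha> = (c - b) * (c + b + 1) * (a - of_nat d / 2) * (a + of_nat d / 2 + 1)"

definition v :: "nat \<Rightarrow> nat \<Rightarrow> 'a" where
  "v k = (\<lambda>j. if j = k \<and> k \<le> d then 1 else 0)"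

(* Replacing d/2 by a variable turns the identities below into polynomial ones for algebra. *)
lemma half_d: obtains h :: 'a where "of_nat d / 2 = h" "of_nat d = 2 * h"
proof -
  have "of_nat d = 2 * (of_nat d / 2 :: 'a)" using two_nonzero by simp
  then show thesis using that by blast
qed

lemma phi_0: "\<phi> 0 = 0" by (simp add: racah_phi_def)
lemma phi_Suc_d: "\<phi> (Suc d) = 0" by (simp add: racah_phi_def)
lemma psi_Suc_d: "\<psi> (Suc d) = 0" by (simp add: \<psi>_def)

lemma v_in_coord_space: "v k \<in> coord_space d"
  by (simp add: v_def coord_space_def)

lemma A_v: "A (v k) = (\<lambda>j. \<theta> k * v k j + v (Suc k) j)"
  by (auto simp: RA_def v_def fun_eq_iff)

lemma B_v: "B (v k) = (\<lambda>j. \<theta>' k * v k j + \<phi> k * v (k - 1) j)"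
proof (cases k)
  case (Suc m)
  then show ?thesis
    by (auto simp: RB_def v_def fun_eq_iff) (metis le_antisym not_less_eq_eq phi_Suc_d)
qed (auto simp: RB_def v_def fun_eq_iff phi_0)

lemma coord_space_sum_v: "x \<in> coord_space d \<Longrightarrow> (\<lambda>j. \<Sum>k\<le>d. x k * v k j) = x"
  by (auto simp: v_def coord_space_def fun_eq_iff if_distrib[of "(*) _"] cong: if_cong)

(* The relation the Racah algebra imposes when alpha and delta are scalars; here it is checked
   directly on the basis. *)
definition tridiagonal_relation :: "(nat \<Rightarrow> 'a) \<Rightarrow> nat \<Rightarrow> 'a" where
  "tridiagonal_relation x = (\<lambda>j. A (A (B x)) j - 2 * A (B (A x)) j + B (A (A x)) j - 2 * A (A x) j
     - 2 * A (B x) j - 2 * B (A x) j + 2 * \<delta> * A x j - 2 * \<alpha> * x j)"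

lemma tridiagonal_relation_v: "tridiagonal_relation (v k) j = 0"
proof -
  obtain h :: 'a where h: "of_nat d / 2 = h" "of_nat d = 2 * h" using half_d by metis
  show ?thesis
  proof (cases k)
    case 0
    show ?thesis unfolding 0
      by (simp add: tridiagonal_relation_def A_v B_v RA_add RB_add RA_smult RB_smult phi_0,
          simp only: racah_theta_def racah_phi_def racah_delta_def \<alpha>_def h(1) of_nat_Suc of_nat_0,
          unfold h(2), algebra)
  next
    case (Suc m)
    show ?thesis unfolding Suc
      by (simp add: tridiagonal_relation_def A_v B_v RA_add RB_add RA_smult RB_smult,
          simp only: racah_theta_def racah_phi_def racah_delta_def \<alpha>_def h(1) of_nat_Suc diff_Suc_1,
          unfold h(2), algebra)
  qed
qed

lemma tridiagonal_relation_eq_0: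
  assumes "x \<in> coord_space d"
  shows "tridiagonal_relation x j = 0"
proof -
  have "tridiagonal_relation x j = tridiagonal_relation (\<lambda>j. \<Sum>k\<le>d. x k * v k j) j"
    using coord_space_sum_v[OF assms] by simp
  also have "\<dots> = (\<Sum>k\<le>d. x k * tridiagonal_relation (v k) j)"
    by (simp add: tridiagonal_relation_def RA_sum RB_sum RA_smult RB_smult sum_subtractf
        sum.distrib sum_distrib_left algebra_simps)
  finally show ?thesis by (simp add: tridiagonal_relation_v)
qed

definition A_shift :: "nat \<Rightarrow> (nat \<Rightarrow> 'a) \<Rightarrow> nat \<Rightarrow> 'a" where
  "A_shift m x = (\<lambda>j. A x j - \<theta> m * x j)"

fun A_shifts :: "nat list \<Rightarrow> (nat \<Rightarrow> 'a) \<Rightarrow> nat \<Rightarrow> 'a" where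
  "A_shifts [] x = x"
| "A_shifts (m # ms) x = A_shift m (A_shifts ms x)"

lemma A_shift_commute: "A_shift m (A_shift n x) = A_shift n (A_shift m x)"
  by (simp add: A_shift_def RA_diff RA_smult fun_eq_iff) (simp add: algebra_simps)

lemma A_shift_add: "A_shift m (\<lambda>j. f j + g j) = (\<lambda>j. A_shift m f j + A_shift m g j)"
  by (simp add: A_shift_def RA_add fun_eq_iff algebra_simps)

lemma A_shift_smult: "A_shift m (\<lambda>j. s * f j) = (\<lambda>j. s * A_shift m f j)"
  by (simp add: A_shift_def RA_smult fun_eq_iff algebra_simps)

lemma A_shift_in_coord_space: "x \<in> coord_space d \<Longrightarrow> A_shift m x \<in> coord_space d"
  by (simp add: A_shift_def coord_space_def RA_def)

lemma A_shift_vanish_below: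
  assumes "x \<in> coord_space d" and "\<forall>j<k. x j = 0"
  shows "\<forall>j<Suc k. A_shift k x j = 0"
  using assms by (auto simp: A_shift_def RA_def coord_space_def less_Suc_eq)

lemma A_shifts_append: "A_shifts (ms @ ns) x = A_shifts ms (A_shifts ns x)"
  by (induction ms) auto

lemma A_shifts_rev: "A_shifts (rev ms) x = A_shifts ms x"
proof -
  have "A_shifts ms (A_shift n x) = A_shift n (A_shifts ms x)" for ms n x
    by (induction ms) (auto simp: A_shift_commute)
  then show ?thesis
    by (induction ms arbitrary: x) (auto simp: A_shifts_append)
qed

lemma A_shifts_add: "A_shifts ms (\<lambda>j. f j + g j) = (\<lambda>j. A_shifts ms f j + A_shifts ms g j)"
  by (induction ms) (auto simp: A_shift_add)

lemma A_shifts_smult: "A_shifts ms (\<lambda>j. s * f j) = (\<lambda>j. s * A_shifts ms f j)"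
  by (induction ms) (auto simp: A_shift_smult)

lemma A_shifts_in_coord_space: "x \<in> coord_space d \<Longrightarrow> A_shifts ms x \<in> coord_space d"
  by (induction ms) (auto simp: A_shift_in_coord_space)

lemma A_shifts_vanish_below:
  assumes x: "x \<in> coord_space d" and "\<forall>j<m. x j = 0" and "m \<le> k"
  shows "\<forall>j<k. A_shifts (rev [m..<k]) x j = 0"
  using \<open>m \<le> k\<close>
proof (induction k)
  case (Suc k)
  show ?case
  proof (cases "m = Suc k")
    case True
    then show ?thesis using assms(2) by simp
  next
    case False
    with Suc have "m \<le> k" by simp
    with Suc.IH have "\<forall>j<k. A_shifts (rev [m..<k]) x j = 0" by simp
    with A_shift_vanish_below[OF A_shifts_in_coord_space[OF x]] \<open>m \<le> k\<close> show ?thesis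
      by simp
  qed
qed (use assms(2) in simp)

definition u :: "nat \<Rightarrow> nat \<Rightarrow> 'a" where
  "u i = A_shifts [Suc i..<Suc d] (v 0)"

lemma u_in_coord_space: "u i \<in> coord_space d"
  by (simp add: u_def A_shifts_in_coord_space v_in_coord_space)

lemma u_d: "u d = v 0" and u_Suc_d: "u (Suc d) = v 0"
  by (simp_all add: u_def)

lemma u_eq_A_shift: "i < d \<Longrightarrow> u i = A_shift (Suc i) (u (Suc i))"
  by (simp add: u_def upt_conv_Cons del: upt_Suc)

lemma A_u: "1 \<le> i \<Longrightarrow> i \<le> d \<Longrightarrow> A (u i) = (\<lambda>j. \<theta> i * u i j + u (i - 1) j)"
  using u_eq_A_shift[of "i - 1"] by (simp add: A_shift_def fun_eq_iff)

lemma A_shifts_to_u_0: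
  assumes x: "x \<in> coord_space d"
  shows "A_shifts (rev [1..<Suc d]) x = (\<lambda>j. x 0 * u 0 j)"
proof -
  define z where "z = (\<lambda>j. x j + (- x 0) * v 0 j)"
  have z: "z \<in> coord_space d" using x by (auto simp: z_def coord_space_def v_def)
  have "\<forall>j<Suc d. A_shifts (rev [1..<Suc d]) z j = 0"
    by (rule A_shifts_vanish_below[OF z]) (auto simp: z_def v_def)
  then have z0: "A_shifts (rev [1..<Suc d]) z = (\<lambda>_. 0)"
    by (intro coord_space_eq_0[OF A_shifts_in_coord_space[OF z]]) auto
  have "x = (\<lambda>j. z j + x 0 * v 0 j)" by (simp add: z_def)
  then have "A_shifts (rev [1..<Suc d]) x
      = (\<lambda>j. A_shifts (rev [1..<Suc d]) z j + x 0 * A_shifts [1..<Suc d] (v 0) j)"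
    by (metis A_shifts_add A_shifts_smult A_shifts_rev)
  then show ?thesis unfolding z0 u_def by simp
qed

lemma A_u_0: "A (u 0) = (\<lambda>j. \<theta> 0 * u 0 j)"
proof -
  have "A_shift 0 (u 0) = A_shifts [0..<Suc d] (v 0)"
    by (simp add: u_def upt_conv_Cons del: upt_Suc)
  also have "\<dots> = A_shifts (rev [0..<Suc d]) (v 0)"
    by (simp only: A_shifts_rev)
  also have "\<dots> = (\<lambda>_. 0)"
  proof (rule coord_space_eq_0[OF A_shifts_in_coord_space[OF v_in_coord_space]])
    have "\<forall>j<Suc d. A_shifts (rev [0..<Suc d]) (v 0) j = 0"
      by (rule A_shifts_vanish_below[OF v_in_coord_space]) auto
    then show "\<forall>j\<le>d. A_shifts (rev [0..<Suc d]) (v 0) j = 0"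
      by (simp only: less_Suc_eq_le)
  qed
  finally show ?thesis by (auto simp: A_shift_def fun_eq_iff dest: fun_cong)
qed

lemma u_triangular: "i \<le> d \<Longrightarrow> u i (d - i) = 1 \<and> (\<forall>j > d - i. u i j = 0)"
proof (induction "d - i" arbitrary: i)
  case 0
  then have "i = d" by simp
  then show ?case by (simp add: u_d v_def)
next
  case (Suc n)
  then have "Suc i \<le> d" by simp
  with Suc.hyps have IH: "u (Suc i) (d - Suc i) = 1 \<and> (\<forall>j > d - Suc i. u (Suc i) j = 0)"
    by simp
  have "u i = A_shift (Suc i) (u (Suc i))" using \<open>Suc i \<le> d\<close> by (simp add: u_eq_A_shift)
  with IH \<open>Suc i \<le> d\<close> show ?case by (auto simp: A_shift_def RA_def Suc_diff_Suc)
qed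

lemma A_psi_u:
  assumes "i \<le> d"
  shows "A (\<lambda>j. \<psi> (Suc i) * u (Suc i) j)
    = (\<lambda>j. \<theta> (Suc i) * (\<psi> (Suc i) * u (Suc i) j) + \<psi> (Suc i) * u i j)"
proof (cases "Suc i \<le> d")
  case True
  then show ?thesis by (simp only: RA_smult) (simp add: A_u fun_eq_iff algebra_simps)
next
  case False
  with assms have "Suc i = Suc d" by simp
  then show ?thesis by (simp add: psi_Suc_d RA_def fun_eq_iff)
qed

(* If A and B act bidiagonally on U2, U1 as below, the relation at U2 determines B on U0. *)
lemma tridiagonal_relation_solve_B:
  assumes A2: "A U2 = (\<lambda>j. t2 * U2 j + U1 j)" and A1: "A U1 = (\<lambda>j. t1 * U1 j + U0 j)"
    and AZ: "A Z = (\<lambda>j. t3 * Z j + p3 * U2 j)"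
    and B2: "B U2 = (\<lambda>j. s2 * U2 j + Z j)" and B1: "B U1 = (\<lambda>j. s1 * U1 j + p2 * U2 j)"
    and t: "(t3 - t2)\<^sup>2 = 2 * (t3 + t2)"
    and R: "tridiagonal_relation U2 j = 0"
  shows "B U0 j = (2 * s1 + 2 - s2) * U0 j
    + ((s2 - s1) * (t2 - t1) + 2 * p2 - p3 + 2 * (t1 + t2 + s1 + s2) - 2 * \<delta>) * U1 j
    + (p3 * (t2 - t3 + 2) + p2 * (t2 - t1 + 2) + 2 * t2\<^sup>2 + 4 * s2 * t2 - 2 * \<delta> * t2 + 2 * \<alpha>) * U2 j"
proof -
  have "tridiagonal_relation U2 j =
      (((s2 * t2 + p3) * t2 + t3 * p3) * U2 j + ((s2 * t2 + p3) + s2 * t1) * U1 j + s2 * U0 j + t3\<^sup>2 * Z j)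
    - 2 * (((t2 * s2 + p2) * t2 + t2 * p3) * U2 j + ((t2 * s2 + p2) + s1 * t1) * U1 j + s1 * U0 j + t2 * t3 * Z j)
    + (t2\<^sup>2 * (s2 * U2 j + Z j) + (t2 + t1) * (s1 * U1 j + p2 * U2 j) + B U0 j)
    - 2 * (t2\<^sup>2 * U2 j + (t2 + t1) * U1 j + U0 j)
    - 2 * ((s2 * t2 + p3) * U2 j + s2 * U1 j + t3 * Z j)
    - 2 * ((t2 * s2 + p2) * U2 j + s1 * U1 j + t2 * Z j)
    + 2 * \<delta> * (t2 * U2 j + U1 j) - 2 * \<alpha> * U2 j"
    by (simp add: tridiagonal_relation_def A2 A1 B2 AZ B1 RA_add RA_smult RB_add RB_smult
        algebra_simps power2_eq_square)
  with R t show ?thesis by algebra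
qed

lemma racah_theta_diff_sq: "(\<theta> (Suc k) - \<theta> k)\<^sup>2 = 2 * (\<theta> (Suc k) + \<theta> k)"
proof -
  obtain h :: 'a where h: "of_nat d / 2 = h" using half_d by metis
  show ?thesis unfolding racah_theta_def of_nat_Suc h by algebra
qed

lemma B_u_step:
  assumes i: "Suc (Suc i) \<le> d"
    and B1: "B (u (Suc i)) = (\<lambda>j. \<theta>' (d - Suc i) * u (Suc i) j + \<psi> (Suc (Suc i)) * u (Suc (Suc i)) j)"
    and B2: "B (u (Suc (Suc i))) = (\<lambda>j. \<theta>' (d - Suc (Suc i)) * u (Suc (Suc i)) j
                                        + \<psi> (Suc (Suc (Suc i))) * u (Suc (Suc (Suc i))) j)"
  shows "B (u i) = (\<lambda>j. \<theta>' (d - i) * u i j + \<psi> (Suc i) * u (Suc i) j)"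
proof
  fix j
  obtain h :: 'a where h: "of_nat d / 2 = h" "of_nat d = 2 * h" using half_d by metis
  have n: "of_nat (d - Suc (Suc i)) = (of_nat d - of_nat i - 2 :: 'a)"
    "of_nat (d - Suc i) = (of_nat d - of_nat i - 1 :: 'a)" "of_nat (d - i) = (of_nat d - of_nat i :: 'a)"
    using i by simp_all
  have A2: "A (u (Suc (Suc i))) = (\<lambda>j. \<theta> (Suc (Suc i)) * u (Suc (Suc i)) j + u (Suc i) j)"
    and A1: "A (u (Suc i)) = (\<lambda>j. \<theta> (Suc i) * u (Suc i) j + u i j)"
    using i by (simp_all add: A_u)
  have R: "tridiagonal_relation (u (Suc (Suc i))) j = 0"
    by (rule tridiagonal_relation_eq_0[OF u_in_coord_space])
  have "2 * \<theta>' (d - Suc i) + 2 - \<theta>' (d - Suc (Suc i)) = \<theta>' (d - i)"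
    unfolding racah_theta_def n h(1) unfolding h(2) by algebra
  moreover have "(\<theta>' (d - Suc (Suc i)) - \<theta>' (d - Suc i)) * (\<theta> (Suc (Suc i)) - \<theta> (Suc i))
       + 2 * \<psi> (Suc (Suc i)) - \<psi> (Suc (Suc (Suc i)))
       + 2 * (\<theta> (Suc i) + \<theta> (Suc (Suc i)) + \<theta>' (d - Suc i) + \<theta>' (d - Suc (Suc i))) - 2 * \<delta>
     = \<psi> (Suc i)"
    unfolding racah_theta_def \<psi>_def racah_delta_def n h(1) unfolding h(2)
    by (simp only: of_nat_Suc) algebra
  moreover have "\<psi> (Suc (Suc (Suc i))) * (\<theta> (Suc (Suc i)) - \<theta> (Suc (Suc (Suc i))) + 2)
       + \<psi> (Suc (Suc i)) * (\<theta> (Suc (Suc i)) - \<theta> (Suc i) + 2) + 2 * (\<theta> (Suc (Suc i)))\<^sup>2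
       + 4 * \<theta>' (d - Suc (Suc i)) * \<theta> (Suc (Suc i)) - 2 * \<delta> * \<theta> (Suc (Suc i)) + 2 * \<alpha> = 0"
    unfolding racah_theta_def \<psi>_def racah_delta_def \<alpha>_def n h(1) unfolding h(2)
    by (simp only: of_nat_Suc) algebra
  ultimately show "B (u i) j = \<theta>' (d - i) * u i j + \<psi> (Suc i) * u (Suc i) j"
    using tridiagonal_relation_solve_B[OF A2 A1 A_psi_u[OF i] B2 B1 racah_theta_diff_sq R] by simp
qed

lemma B_u_d: "B (u d) = (\<lambda>j. \<theta>' 0 * u d j + \<psi> (Suc d) * u (Suc d) j)"
  by (simp add: u_d u_Suc_d B_v phi_0 psi_Suc_d)

lemma B_u_pred_d:
  assumes "1 \<le> d"
  shows "B (u (d - 1)) = (\<lambda>j. \<theta>' 1 * u (d - 1) j + \<psi> d * u d j)"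
proof
  fix j
  obtain h :: 'a where h: "of_nat d / 2 = h" "of_nat d = 2 * h" using half_d by metis
  have u: "u (d - 1) = (\<lambda>j. (\<theta> 0 - \<theta> d) * v 0 j + v 1 j)"
    using u_eq_A_shift[of "d - 1"] assms by (simp add: u_d A_shift_def A_v fun_eq_iff algebra_simps)
  have coeff: "(\<theta> 0 - \<theta> d) * \<theta>' 0 + \<phi> (Suc 0) = \<theta>' (Suc 0) * (\<theta> 0 - \<theta> d) + \<psi> d"
    unfolding racah_theta_def racah_phi_def \<psi>_def h(1) unfolding h(2) by simp algebra
  show "B (u (d - 1)) j = \<theta>' 1 * u (d - 1) j + \<psi> d * u d j"
    unfolding u by (simp add: RB_add RB_smult B_v phi_0 u_d) (use coeff in algebra)
qed

lemma B_u: "i \<le> d \<Longrightarrow> B (u i) = (\<lambda>j. \<theta>' (d - i) * u i j + \<psi> (Suc i) * u (Suc i) j)"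
proof (induction "d - i" arbitrary: i rule: less_induct)
  case less
  consider "i = d" | "Suc i = d" | "Suc (Suc i) \<le> d" using less.prems by linarith
  then show ?case
  proof cases
    case 1
    then show ?thesis using B_u_d by simp
  next
    case 2
    then have "i = d - 1" "d - i = 1" "1 \<le> d" by auto
    with B_u_pred_d 2 show ?thesis by simp
  next
    case 3
    show ?thesis
      by (rule B_u_step[OF 3 less.hyps less.hyps]) (use 3 in auto)
  qed
qed

abbreviation "generators \<equiv> {RA a d, RB a b c d, RC a b c d, RD a b c d}"

abbreviation submodule :: "(nat \<Rightarrow> 'a) set \<Rightarrow> bool" where
  "submodule W \<equiv> is_submodule (coord_space d) generators W"

lemma submoduleI:
  assumes W: "W \<subseteq> coord_space d" and S: "is_subspace W"
    and A: "\<And>x. x \<in> W \<Longrightarrow> A x \<in> W" and B: "\<And>x. x \<in> W \<Longrightarrow> B x \<in> W"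
  shows "submodule W"
proof -
  have "RC a b c d x \<in> W" if x: "x \<in> W" for x
    unfolding RC_def
    by (rule is_subspace_diff[OF S is_subspace_diff[OF S is_subspace_smult[OF S x] A[OF x]] B[OF x]])
  moreover have "RD a b c d x \<in> W" if x: "x \<in> W" for x
    unfolding RD_def divide_inverse_commute
    by (rule is_subspace_smult[OF S is_subspace_diff[OF S A[OF B[OF x]] B[OF A[OF x]]]])
  ultimately have "\<forall>f\<in>generators. \<forall>x\<in>W. f x \<in> W" using A B by blast
  with W S show ?thesis by (simp add: is_submodule_def is_subspace_def)
qed

lemma submodule_A: "submodule W \<Longrightarrow> x \<in> W \<Longrightarrow> A x \<in> W"
  and submodule_B: "submodule W \<Longrightarrow> x \<in> W \<Longrightarrow> B x \<in> W"
  unfolding is_submodule_def by blast+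

lemma submodule_A_shifts:
  assumes W: "submodule W" and "x \<in> W"
  shows "A_shifts ms x \<in> W"
proof (induction ms)
  case (Cons m ms)
  have S: "is_subspace W" using is_submodule_subspace[OF W] .
  show ?case unfolding A_shifts.simps A_shift_def
    by (rule is_subspace_diff[OF S submodule_A[OF W Cons.IH] is_subspace_smult[OF S Cons.IH]])
qed (simp add: \<open>x \<in> W\<close>)

lemma v_0_nonzero: "v 0 \<noteq> (\<lambda>_. 0)"
  by (auto simp: v_def fun_eq_iff)

lemma submodule_lowering:
  assumes W: "submodule W" and phi: "\<forall>k\<in>{1..d}. \<phi> k \<noteq> 0"
    and w: "w \<in> W" "w \<noteq> (\<lambda>_. 0)"
  obtains w' where "w' \<in> W" "w' 0 \<noteq> 0"
proof -
  have "\<exists>w'\<in>W. w' 0 \<noteq> 0" if "w \<in> W" "w m \<noteq> 0" "\<forall>j<m. w j = 0" for w m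
    using that
  proof (induction m arbitrary: w)
    case (Suc m)
    then have "Suc m \<le> d"
      using W by (auto simp: is_submodule_def coord_space_def not_le[symmetric])
    with Suc.prems have "B w m \<noteq> 0" "\<forall>j<m. B w j = 0"
      using phi by (auto simp: RB_def)
    with Suc.IH submodule_B[OF W \<open>w \<in> W\<close>] show ?case by blast
  qed blast
  moreover obtain m where "w m \<noteq> 0" "\<forall>j<m. w j = 0"
    using w(2) exists_least_iff[of "\<lambda>j. w j \<noteq> 0"] by (auto simp: fun_eq_iff)
  ultimately show thesis using w(1) that by blast
qed

lemma submodule_contains_u_0:
  assumes W: "submodule W" and phi: "\<forall>k\<in>{1..d}. \<phi> k \<noteq> 0" and "W \<noteq> {\<lambda>_. 0}"
  shows "u 0 \<in> W"
proof -
  have S: "is_subspace W" using is_submodule_subspace[OF W] .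
  then obtain w where "w \<in> W" "w \<noteq> (\<lambda>_. 0)"
    using \<open>W \<noteq> {\<lambda>_. 0}\<close> by (auto simp: is_subspace_def)
  then obtain w' where w': "w' \<in> W" "w' 0 \<noteq> 0"
    using submodule_lowering[OF W phi] by metis
  have "w' \<in> coord_space d" using W w' by (auto simp: is_submodule_def)
  then have "(\<lambda>j. w' 0 * u 0 j) \<in> W"
    using submodule_A_shifts[OF W w'(1)] A_shifts_to_u_0 by metis
  from is_subspace_smult[OF S this, of "1 / w' 0"] w'(2) show ?thesis by simp
qed

lemma submodule_contains_u:
  assumes W: "submodule W" and psi: "\<forall>k\<in>{1..d}. \<psi> k \<noteq> 0" and "u 0 \<in> W"
  shows "i \<le> d \<Longrightarrow> u i \<in> W"
proof (induction i)
  case (Suc i)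
  have S: "is_subspace W" using is_submodule_subspace[OF W] .
  from Suc have "u i \<in> W" "\<psi> (Suc i) \<noteq> 0" using psi by auto
  moreover from Suc.prems have
    "u (Suc i) = (\<lambda>j. inverse (\<psi> (Suc i)) * (B (u i) j - \<theta>' (d - i) * u i j))"
    using B_u[of i] \<open>\<psi> (Suc i) \<noteq> 0\<close> by (simp add: fun_eq_iff field_simps)
  ultimately show ?case
    using is_subspace_smult[OF S is_subspace_diff[OF S submodule_B[OF W] is_subspace_smult[OF S]]]
    by simp
qed (use \<open>u 0 \<in> W\<close> in simp)

lemma submodule_eq_coord_space:
  assumes W: "submodule W" and "v 0 \<in> W"
  shows "W = coord_space d"
proof
  have S: "is_subspace W" using is_submodule_subspace[OF W] .
  have v: "v k \<in> W" for k
  proof (induction k)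
    case (Suc k)
    have "v (Suc k) = (\<lambda>j. A (v k) j - \<theta> k * v k j)" by (simp add: A_v)
    with Suc show ?case
      using is_subspace_diff[OF S submodule_A[OF W] is_subspace_smult[OF S]] by simp
  qed (rule \<open>v 0 \<in> W\<close>)
  show "coord_space d \<subseteq> W"
  proof
    fix x :: "nat \<Rightarrow> 'a" assume "x \<in> coord_space d"
    moreover have "(\<lambda>j. \<Sum>k\<le>d. x k * v k j) \<in> W"
      by (rule is_subspace_sum[OF S]) (auto intro: is_subspace_smult[OF S v])
    ultimately show "x \<in> W" using coord_space_sum_v by metis
  qed
qed (use W in \<open>simp add: is_submodule_def\<close>)

lemma irreducible_if_phi_psi_nonzero:
  assumes phi: "\<forall>k\<in>{1..d}. \<phi> k \<noteq> 0" and psi: "\<forall>k\<in>{1..d}. \<psi> k \<noteq> 0"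
  shows "R_irreducible a b c d"
  unfolding R_irreducible_def irreducible_module_def
proof (intro conjI allI impI)
  show "coord_space d \<noteq> {\<lambda>_. 0 :: 'a}"
    using v_in_coord_space[of 0] v_0_nonzero by (metis singletonD)
next
  fix W assume W: "submodule W"
  show "W = {\<lambda>_. 0} \<or> W = coord_space d"
  proof (cases "W = {\<lambda>_. 0}")
    case False
    with W phi have "u 0 \<in> W" by (rule submodule_contains_u_0)
    with W psi have "u d \<in> W" by (rule submodule_contains_u) simp
    with W show ?thesis by (simp add: u_d submodule_eq_coord_space)
  qed simp
qed

lemma not_irreducible_if_proper_submodule:
  assumes "submodule W" "w \<in> W" "w \<noteq> (\<lambda>_. 0)" "x \<in> coord_space d" "x \<notin> W"
  shows "\<not> R_irreducible a b c d"
  using assms by (auto simp: R_irreducible_def irreducible_module_def)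

lemma reducible_if_phi_zero:
  assumes k: "k \<in> {1..d}" and "\<phi> k = 0"
  shows "\<not> R_irreducible a b c d"
proof -
  define W where "W = {x \<in> coord_space d. \<forall>j<k. x j = (0::'a)}"
  have "B x \<in> W" if x: "x \<in> W" for x
  proof -
    have "B x j = 0" if "j < k" for j
      using x that \<open>\<phi> k = 0\<close> by (cases "Suc j = k") (auto simp: W_def RB_def)
    then show ?thesis by (simp add: W_def RB_in_coord_space)
  qed
  then have "submodule W"
    by (intro submoduleI) (auto simp: W_def RA_def coord_space_def is_subspace_def)
  moreover have "v k \<in> W" "v k \<noteq> (\<lambda>_. 0)" "v 0 \<notin> W"
    using k by (auto simp: W_def v_def coord_space_def fun_eq_iff)
  ultimately show ?thesis
    using not_irreducible_if_proper_submodule v_in_coord_space by blast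
qed

definition u_span :: "nat \<Rightarrow> (nat \<Rightarrow> 'a) set" where
  "u_span k = {x. \<exists>cs. x = (\<lambda>j. \<Sum>i<k. cs i * u i j)}"

lemma u_span_subspace: "is_subspace (u_span k)"
  unfolding is_subspace_def
proof (intro conjI ballI allI)
  show "(\<lambda>_. 0) \<in> u_span k"
    unfolding u_span_def by (intro CollectI exI[of _ "\<lambda>_. 0"]) simp
next
  fix x y assume "x \<in> u_span k" "y \<in> u_span k"
  then obtain cs ds where "x = (\<lambda>j. \<Sum>i<k. cs i * u i j)" "y = (\<lambda>j. \<Sum>i<k. ds i * u i j)"
    by (auto simp: u_span_def)
  then show "(\<lambda>j. x j + y j) \<in> u_span k"
    unfolding u_span_def
    by (intro CollectI exI[of _ "\<lambda>i. cs i + ds i"]) (simp add: sum.distrib distrib_right)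
next
  fix s x assume "x \<in> u_span k"
  then obtain cs where "x = (\<lambda>j. \<Sum>i<k. cs i * u i j)" by (auto simp: u_span_def)
  then show "(\<lambda>j. s * x j) \<in> u_span k"
    unfolding u_span_def
    by (intro CollectI exI[of _ "\<lambda>i. s * cs i"]) (simp add: sum_distrib_left mult.assoc)
qed

lemma u_in_u_span:
  assumes "i < k"
  shows "u i \<in> u_span k"
  unfolding u_span_def
proof (intro CollectI exI[of _ "\<lambda>i'. if i' = i then 1 else 0"] ext)
  fix j
  show "u i j = (\<Sum>i'<k. (if i' = i then 1 else 0) * u i' j)"
    using assms by (simp add: if_distrib[of "\<lambda>c. c * _"] cong: if_cong)
qed

lemma u_span_subset: "u_span k \<subseteq> coord_space d"
  using u_in_coord_space by (auto simp: u_span_def coord_space_def)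

lemma u_span_closed:
  assumes F: "\<And>cs. F (\<lambda>j. \<Sum>i<k. cs i * u i j) = (\<lambda>j. \<Sum>i<k. cs i * F (u i) j)"
    and Fu: "\<And>i. i < k \<Longrightarrow> F (u i) \<in> u_span k"
    and x: "x \<in> u_span k"
  shows "F x \<in> u_span k"
proof -
  obtain cs where "x = (\<lambda>j. \<Sum>i<k. cs i * u i j)" using x by (auto simp: u_span_def)
  then have "F x = (\<lambda>j. \<Sum>i<k. cs i * F (u i) j)" by (simp add: F)
  also have "\<dots> \<in> u_span k"
    by (intro is_subspace_sum u_span_subspace is_subspace_smult Fu) auto
  finally show ?thesis .
qed

lemma v_0_notin_u_span:
  assumes "k \<le> d"
  shows "v 0 \<notin> u_span k"
proof
  assume "v 0 \<in> u_span k"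
  then obtain cs where v0: "v 0 = (\<lambda>j. \<Sum>i<k. cs i * u i j)" by (auto simp: u_span_def)
  have "cs i = 0" if "i < k" for i
    using that
  proof (induction i rule: less_induct)
    case (less i)
    have "cs i' * u i' (d - i) = (if i' = i then cs i else 0)" if "i' < k" for i'
    proof (cases i' i rule: linorder_cases)
      case less
      then show ?thesis using \<open>\<And>y. y < i \<Longrightarrow> y < k \<Longrightarrow> cs y = 0\<close> \<open>i < k\<close> by simp
    next
      case equal
      then show ?thesis using u_triangular[of i] \<open>i < k\<close> \<open>k \<le> d\<close> by simp
    next
      case greater
      then have "u i' (d - i) = 0" using u_triangular[of i'] that \<open>i < k\<close> \<open>k \<le> d\<close> by simp
      with greater show ?thesis by simp
    qed
    then have "(\<Sum>i'<k. cs i' * u i' (d - i)) = cs i" using less.prems by simp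
    moreover have "v 0 (d - i) = 0" using less.prems \<open>k \<le> d\<close> by (simp add: v_def)
    ultimately show ?case using v0 by metis
  qed
  then have "v 0 = (\<lambda>_. 0)" using v0 by simp
  with v_0_nonzero show False ..
qed

lemma reducible_if_psi_zero:
  assumes k: "k \<in> {1..d}" and "\<psi> k = 0"
  shows "\<not> R_irreducible a b c d"
proof -
  have Au: "A (u i) \<in> u_span k" if "i < k" for i
  proof (cases i)
    case 0
    then show ?thesis
      using that is_subspace_smult[OF u_span_subspace u_in_u_span] by (simp add: A_u_0)
  next
    case (Suc i')
    with that k have "A (u i) = (\<lambda>j. \<theta> i * u i j + u i' j)" by (simp add: A_u)
    also have "\<dots> \<in> u_span k"
      using that Suc by (intro is_subspace_add is_subspace_smult u_span_subspace u_in_u_span) auto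
    finally show ?thesis .
  qed
  have Bu: "B (u i) \<in> u_span k" if "i < k" for i
  proof (cases "Suc i = k")
    case True
    with that k \<open>\<psi> k = 0\<close> show ?thesis
      using is_subspace_smult[OF u_span_subspace u_in_u_span] by (simp add: B_u)
  next
    case False
    from that k have "B (u i) = (\<lambda>j. \<theta>' (d - i) * u i j + \<psi> (Suc i) * u (Suc i) j)"
      by (simp add: B_u)
    also have "\<dots> \<in> u_span k"
      using that False by (intro is_subspace_add is_subspace_smult u_span_subspace u_in_u_span) auto
    finally show ?thesis .
  qed
  have "submodule (u_span k)"
  proof (rule submoduleI[OF u_span_subset u_span_subspace])
    fix x assume x: "x \<in> u_span k"
    show "A x \<in> u_span k" by (rule u_span_closed[where F = A, OF _ Au x]) (simp add: RA_sum RA_smult)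
    show "B x \<in> u_span k" by (rule u_span_closed[where F = B, OF _ Bu x]) (simp add: RB_sum RB_smult)
  qed
  moreover have "u 0 \<in> u_span k" "v 0 \<notin> u_span k"
    using k u_in_u_span[of 0 k] v_0_notin_u_span[of k] by auto
  moreover have "u 0 \<noteq> (\<lambda>_. 0)" using u_triangular[of 0] by (metis diff_zero le0 zero_neq_one)
  ultimately show ?thesis using not_irreducible_if_proper_submodule v_in_coord_space by blast
qed

lemma irreducible_iff_phi_psi_nonzero:
  "R_irreducible a b c d \<longleftrightarrow> (\<forall>k\<in>{1..d}. \<phi> k \<noteq> 0 \<and> \<psi> k \<noteq> 0)"
proof
  assume "R_irreducible a b c d"
  then show "\<forall>k\<in>{1..d}. \<phi> k \<noteq> 0 \<and> \<psi> k \<noteq> 0"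
    using reducible_if_phi_zero reducible_if_psi_zero by blast
qed (simp add: irreducible_if_phi_psi_nonzero)

lemma phi_nonzero_iff:
  assumes "k \<le> Suc d"
  shows "\<phi> k \<noteq> 0 \<longleftrightarrow> of_nat k \<noteq> (0::'a) \<and> of_nat (Suc d - k) \<noteq> (0::'a)
    \<and> a + b + c + 1 \<noteq> of_nat d / 2 - of_nat (Suc d - k) \<and> a + b - c \<noteq> of_nat d / 2 - of_nat (Suc d - k)"
proof -
  obtain h :: 'a where h: "of_nat d / 2 = h" "of_nat d = 2 * h" using half_d by metis
  have n: "of_nat (Suc d - k) = (of_nat d + 1 - of_nat k :: 'a)" using assms by (simp add: of_nat_diff)
  have "\<phi> k = - (of_nat k * of_nat (Suc d - k)
      * (a + b + c + 1 - (of_nat d / 2 - of_nat (Suc d - k)))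
      * (a + b - c - (of_nat d / 2 - of_nat (Suc d - k))))"
    unfolding racah_phi_def n h(1) unfolding h(2) by algebra
  then show ?thesis
    by (simp only: neg_equal_0_iff_equal mult_eq_0_iff right_minus_eq de_Morgan_disj conj_assoc)
qed

lemma psi_nonzero_iff:
  assumes "k \<le> Suc d"
  shows "\<psi> k \<noteq> 0 \<longleftrightarrow> of_nat k \<noteq> (0::'a) \<and> of_nat (Suc d - k) \<noteq> (0::'a)
    \<and> - a + b + c \<noteq> of_nat d / 2 - of_nat k \<and> a - b + c \<noteq> of_nat d / 2 - of_nat (Suc d - k)"
proof -
  obtain h :: 'a where h: "of_nat d / 2 = h" "of_nat d = 2 * h" using half_d by metis
  have n: "of_nat (Suc d - k) = (of_nat d + 1 - of_nat k :: 'a)" using assms by (simp add: of_nat_diff)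
  have "\<psi> k = of_nat k * of_nat (Suc d - k)
      * (- a + b + c - (of_nat d / 2 - of_nat k))
      * (a - b + c - (of_nat d / 2 - of_nat (Suc d - k)))"
    unfolding \<psi>_def n h(1) unfolding h(2) by algebra
  then show ?thesis
    by (simp only: mult_eq_0_iff right_minus_eq de_Morgan_disj conj_assoc)
qed

lemma phi_psi_nonzero_iff:
  "(\<forall>k\<in>{1..d}. \<phi> k \<noteq> 0 \<and> \<psi> k \<noteq> 0) \<longleftrightarrow>
    (\<forall>k\<in>{1..d}. of_nat k \<noteq> (0::'a)) \<and>
    (\<forall>i\<in>{1..d}. a + b + c + 1 \<noteq> of_nat d / 2 - of_nat i
                 \<and> - a + b + c \<noteq> of_nat d / 2 - of_nat i
                 \<and> a - b + c \<noteq> of_nat d / 2 - of_nat i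
                 \<and> a + b - c \<noteq> of_nat d / 2 - of_nat i)"
proof -
  define P where "P i \<longleftrightarrow> of_nat i \<noteq> (0::'a) \<and> a + b + c + 1 \<noteq> of_nat d / 2 - of_nat i
    \<and> a - b + c \<noteq> of_nat d / 2 - of_nat i \<and> a + b - c \<noteq> of_nat d / 2 - of_nat i" for i
  define Q where "Q i \<longleftrightarrow> of_nat i \<noteq> (0::'a) \<and> - a + b + c \<noteq> of_nat d / 2 - of_nat i" for i
  have "\<phi> k \<noteq> 0 \<and> \<psi> k \<noteq> 0 \<longleftrightarrow> Q k \<and> P (Suc d - k)" if "k \<in> {1..d}" for k
    using phi_nonzero_iff[of k] psi_nonzero_iff[of k] that unfolding P_def Q_def by auto
  then have "(\<forall>k\<in>{1..d}. \<phi> k \<noteq> 0 \<and> \<psi> k \<noteq> 0) \<longleftrightarrow> (\<forall>k\<in>{1..d}. Q k \<and> P (Suc d - k))"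
    by (rule ball_cong[OF refl])
  also have "\<dots> \<longleftrightarrow> (\<forall>k\<in>{1..d}. Q k) \<and> (\<forall>k\<in>{1..d}. P k)"
    unfolding ball_conj_distrib ball_atLeastAtMost_reflect ..
  finally show ?thesis unfolding P_def Q_def by blast
qed

end

lemma CHAR_zero_or_gt_iff:
  "CHAR('a::semiring_1) = 0 \<or> CHAR('a) > d \<longleftrightarrow> (\<forall>k\<in>{1..d}. of_nat k \<noteq> (0::'a))"
proof
  assume "CHAR('a) = 0 \<or> CHAR('a) > d"
  then show "\<forall>k\<in>{1..d}. of_nat k \<noteq> (0::'a)"
    by (auto simp: of_nat_eq_0_iff_char_dvd dest: dvd_imp_le)
next
  assume "\<forall>k\<in>{1..d}. of_nat k \<noteq> (0::'a)"
  then have "CHAR('a) \<notin> {1..d}" using of_nat_CHAR[where 'a = 'a] by blast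
  then show "CHAR('a) = 0 \<or> CHAR('a) > d" by auto
qed

lemma two_neq_zero_if_CHAR_neq_2:
  assumes "CHAR('a::field) \<noteq> 2"
  shows "(2::'a) \<noteq> 0"
proof
  assume "(2::'a) = 0"
  then have "of_nat 2 = (0::'a)" by simp
  then have "CHAR('a) dvd 2" by (simp only: of_nat_eq_0_iff_char_dvd)
  then have "CHAR('a) \<le> 2" "CHAR('a) \<noteq> 0"
    by (simp_all add: dvd_imp_le) (metis dvd_0_left_iff gr0I zero_neq_numeral)
  with CHAR_not_1[where 'a = 'a] assms show False by linarith
qed

theorem theorem4p5:
  fixes a b c :: "'a::alg_closed_field" and d :: nat
  assumes "CHAR('a) \<noteq> 2"
  shows "R_irreducible a b c d \<longleftrightarrow>
    ((CHAR('a) = 0 \<or> CHAR('a) > d) \<and>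
     (\<forall>i\<in>{1..d}. a + b + c + 1 \<noteq> of_nat d / 2 - of_nat i
                  \<and> - a + b + c \<noteq> of_nat d / 2 - of_nat i
                  \<and> a - b + c \<noteq> of_nat d / 2 - of_nat i
                  \<and> a + b - c \<noteq> of_nat d / 2 - of_nat i))"
proof -
  interpret racah_module a b c d
    using two_neq_zero_if_CHAR_neq_2[OF assms] by unfold_locales
  show ?thesis
    by (simp only: irreducible_iff_phi_psi_nonzero phi_psi_nonzero_iff CHAR_zero_or_gt_iff)
qed

end
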